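(* For every Hermitian $S=(s_{jl})\in\mathbb{C}^{4\times4}$ and every $\varepsilon\in\{1,-1\}$, $$\max\{p(\theta_1,\theta_2)^2-q(\theta_1,\theta_2):\theta_1,\theta_2\in(-\pi,\pi]\}\ge0 .$$
   Context: Let $S=(s_{jl})_{j,l=1}^4$ be a Hermitian $4\times4$ complex matrix (so $s_{jj}\in\mathbb{R}$ and $s_{lj}=\overline{s_{jl}}$) and $\varepsilon\in\{1,-1\}$. For $\theta_1,\theta_2\in\mathbb{R}$ define $$p=-\tfrac12\Big[s_{11}+s_{22}+s_{33}+s_{44}+2\varepsilon\operatorname{Re}(s_{12}\mathrm{e}^{i\theta_1})+2\varepsilon\operatorname{Re}(s_{34}\mathrm{e}^{i\theta_2})\Big],$$ $$\begin{aligned}q={}&-\big(|s_{13}|^2-s_{11}s_{33}+|s_{14}|^2-s_{11}s_{44}+|s_{23}|^2-s_{22}s_{33}+|s_{24}|^2-s_{22}s_{44}\big)\\&-2\varepsilon\Big[-(s_{33}+s_{44})\operatorname{Re}(s_{12}\mathrm{e}^{i\theta_1})+\operatorname{Re}\big((s_{13}\overline{s_{23}}+s_{14}\overline{s_{24}})\mathrm{e}^{i\theta_1}\big)\\&\qquad-(s_{11}+s_{22})\operatorname{Re}(s_{34}\mathrm{e}^{i\theta_2})+\operatorname{Re}\big((\overline{s_{13}}s_{14}+\overline{s_{23}}s_{24})\mathrm{e}^{i\theta_2}\big)\Big]\\&-2\operatorname{Re}\big((s_{14}\overline{s_{23}}-s_{12}s_{34})\mathrm{e}^{i(\theta_1+\theta_2)}\big)-2\operatorname{Re}\big((s_{13}\overline{s_{24}}-s_{12}\overline{s_{34}})\mathrm{e}^{i(\theta_1-\theta_2)}\big).\end{aligned}$$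 (These are the coefficients of the asymptotic band equation $d^2+2pd+q=0$ for a lattice with coupling $\Psi'_v=S\Psi_v$ at each vertex, where $\varepsilon=(-1)^n$.) *)

theory Defs
  imports "HOL-Analysis.Analysis"
begin

text \<open>A 4x4 complex matrix is indexed by the numeral type 4; the paper's index
  j = 1,2,3,4 corresponds to the elements 1,2,3,4 of type 4 (where 4 = 0 in type 4,
  a distinct fourth element).\<close>

definition hermitian4 :: "complex^4^4 \<Rightarrow> bool" where
  "hermitian4 S \<longleftrightarrow> (\<forall>j l. S $ l $ j = cnj (S $ j $ l))"

abbreviation ent :: "complex^4^4 \<Rightarrow> 4 \<Rightarrow> 4 \<Rightarrow> complex" where
  "ent S j l \<equiv> S $ j $ l"

definition band_p :: "complex^4^4 \<Rightarrow> real \<Rightarrow> real \<Rightarrow> real \<Rightarrow> real" where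
  "band_p S \<epsilon> \<theta>1 \<theta>2 = - (1/2) *
     (Re (ent S 1 1) + Re (ent S 2 2) + Re (ent S 3 3) + Re (ent S 4 4)
      + 2 * \<epsilon> * Re (ent S 1 2 * cis \<theta>1) + 2 * \<epsilon> * Re (ent S 3 4 * cis \<theta>2))"

definition band_q :: "complex^4^4 \<Rightarrow> real \<Rightarrow> real \<Rightarrow> real \<Rightarrow> real" where
  "band_q S \<epsilon> \<theta>1 \<theta>2 =
     - ((cmod (ent S 1 3))\<^sup>2 - Re (ent S 1 1) * Re (ent S 3 3)
        + (cmod (ent S 1 4))\<^sup>2 - Re (ent S 1 1) * Re (ent S 4 4)
        + (cmod (ent S 2 3))\<^sup>2 - Re (ent S 2 2) * Re (ent S 3 3)
        + (cmod (ent S 2 4))\<^sup>2 - Re (ent S 2 2) * Re (ent S 4 4))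
     - 2 * \<epsilon> *
       ( - (Re (ent S 3 3) + Re (ent S 4 4)) * Re (ent S 1 2 * cis \<theta>1)
         + Re ((ent S 1 3 * cnj (ent S 2 3) + ent S 1 4 * cnj (ent S 2 4)) * cis \<theta>1)
         - (Re (ent S 1 1) + Re (ent S 2 2)) * Re (ent S 3 4 * cis \<theta>2)
         + Re ((cnj (ent S 1 3) * ent S 1 4 + cnj (ent S 2 3) * ent S 2 4) * cis \<theta>2))
     - 2 * Re ((ent S 1 4 * cnj (ent S 2 3) - ent S 1 2 * ent S 3 4) * cis (\<theta>1 + \<theta>2))
     - 2 * Re ((ent S 1 3 * cnj (ent S 2 4) - ent S 1 2 * cnj (ent S 3 4)) * cis (\<theta>1 - \<theta>2))"

end

theory Submission
  imports Defs
begin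

text \<open>
  Write f(t1,t2) = p(t1,t2)^2 - q(t1,t2).  The coefficients p and q
  depend on the angles only through u = cis t1 and v = cis t2 (note that
  cis (t1 + t2) = u v and cis (t1 - t2) = u conj v), so f = F(u,v) for an explicit
  real-valued form F on pairs of unit complex numbers.  Averaging F over the eight
  sample pairs (u, v) with u a fourth root of unity and v = u or v = -u cancels every
  term that is odd in u or v, and what survives is a sum of squares,
  ((s11 + s22 - s33 - s44)/2)^2 + |s12|^2/2 + |s34|^2/2 + |s13|^2 + ... + |s24|^2.
  Hence some sample value of f is nonnegative.  On the other hand f is continuous and
  2 pi-periodic in each variable, so it attains its maximum over (-pi,pi]^2; that
  maximum dominates every sample value and is therefore nonnegative.
  The file proves, in order: the rewriting f = F(cis, cis), the averaging identity,
  the bound of F on the torus by any bound of f on (-pi,pi]^2, the attainment of the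
  maximum for continuous functions on [-pi,pi]^2 with equal values on opposite edges,
  continuity and periodicity of f, and finally the theorem.  The argument uses only the
  formulas for p and q (with the diagonal entries entering through their real parts).
\<close>

text \<open>The discriminant p^2 - q of the asymptotic band equation d^2 + 2pd + q = 0.\<close>

definition band_disc :: "complex^4^4 \<Rightarrow> real \<Rightarrow> real \<Rightarrow> real \<Rightarrow> real" where
  "band_disc S \<epsilon> t1 t2 = (band_p S \<epsilon> t1 t2)\<^sup>2 - band_q S \<epsilon> t1 t2"

definition disc_form :: "complex^4^4 \<Rightarrow> real \<Rightarrow> complex \<Rightarrow> complex \<Rightarrow> real" where
  "disc_form S \<epsilon> u v =
     (- (1/2) * (Re (ent S 1 1) + Re (ent S 2 2) + Re (ent S 3 3) + Re (ent S 4 4)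
        + 2 * \<epsilon> * Re (ent S 1 2 * u) + 2 * \<epsilon> * Re (ent S 3 4 * v)))\<^sup>2
   - (- ((cmod (ent S 1 3))\<^sup>2 - Re (ent S 1 1) * Re (ent S 3 3)
        + (cmod (ent S 1 4))\<^sup>2 - Re (ent S 1 1) * Re (ent S 4 4)
        + (cmod (ent S 2 3))\<^sup>2 - Re (ent S 2 2) * Re (ent S 3 3)
        + (cmod (ent S 2 4))\<^sup>2 - Re (ent S 2 2) * Re (ent S 4 4))
     - 2 * \<epsilon> *
       ( - (Re (ent S 3 3) + Re (ent S 4 4)) * Re (ent S 1 2 * u)
         + Re ((ent S 1 3 * cnj (ent S 2 3) + ent S 1 4 * cnj (ent S 2 4)) * u)
         - (Re (ent S 1 1) + Re (ent S 2 2)) * Re (ent S 3 4 * v)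
         + Re ((cnj (ent S 1 3) * ent S 1 4 + cnj (ent S 2 3) * ent S 2 4) * v))
     - 2 * Re ((ent S 1 4 * cnj (ent S 2 3) - ent S 1 2 * ent S 3 4) * (u * v))
     - 2 * Re ((ent S 1 3 * cnj (ent S 2 4) - ent S 1 2 * cnj (ent S 3 4)) * (u * cnj v)))"

lemma band_disc_eq_disc_form:
  "band_disc S \<epsilon> t1 t2 = disc_form S \<epsilon> (cis t1) (cis t2)"
proof -
  have "cis (t1 + t2) = cis t1 * cis t2" "cis (t1 - t2) = cis t1 * cnj (cis t2)"
    by (simp_all add: cis_mult cis_cnj)
  then show ?thesis
    unfolding band_disc_def band_p_def band_q_def disc_form_def by simp
qed

lemma disc_form_average:
  assumes "\<epsilon> = 1 \<or> \<epsilon> = -1"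
  shows "(\<Sum>u\<leftarrow>[1, \<i>, -1, -\<i>]. disc_form S \<epsilon> u u + disc_form S \<epsilon> u (-u)) =
    8 * (((Re (ent S 1 1) + Re (ent S 2 2) - Re (ent S 3 3) - Re (ent S 4 4)) / 2)\<^sup>2
       + (cmod (ent S 1 2))\<^sup>2 / 2 + (cmod (ent S 3 4))\<^sup>2 / 2
       + (cmod (ent S 1 3))\<^sup>2 + (cmod (ent S 1 4))\<^sup>2
       + (cmod (ent S 2 3))\<^sup>2 + (cmod (ent S 2 4))\<^sup>2)"
  using assms unfolding disc_form_def cmod_power2
  by (elim disjE; simp add: power2_eq_square field_simps)

corollary disc_form_average_nonneg:
  assumes "\<epsilon> = 1 \<or> \<epsilon> = -1"
  shows "0 \<le> (\<Sum>u\<leftarrow>[1, \<i>, -1, -\<i>]. disc_form S \<epsilon> u u + disc_form S \<epsilon> u (-u))"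
  unfolding disc_form_average[OF assms] by simp

text \<open>Every pair of unit complex numbers is (cis t1, cis t2) with angles in (-pi, pi],
  so the form is bounded on the torus by any bound for the discriminant on (-pi, pi]^2.\<close>

lemma disc_form_le_bound:
  assumes bound: "\<And>t1 t2. t1 \<in> {-pi<..pi} \<Longrightarrow> t2 \<in> {-pi<..pi} \<Longrightarrow> band_disc S \<epsilon> t1 t2 \<le> M"
    and unit: "cmod u = 1" "cmod v = 1"
  shows "disc_form S \<epsilon> u v \<le> M"
proof -
  have "cis (Arg z) = z" if "cmod z = 1" for z
  proof -
    have "z \<noteq> 0" using that by auto
    then show ?thesis using that cis_Arg[of z] by (simp add: sgn_div_norm)
  qed
  then have "disc_form S \<epsilon> u v = band_disc S \<epsilon> (Arg u) (Arg v)"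
    using unit by (simp add: band_disc_eq_disc_form)
  also have "\<dots> \<le> M"
    using bound Arg_bounded by simp
  finally show ?thesis .
qed

lemma sample_sum_le_bound:
  assumes bound: "\<And>t1 t2. t1 \<in> {-pi<..pi} \<Longrightarrow> t2 \<in> {-pi<..pi} \<Longrightarrow> band_disc S \<epsilon> t1 t2 \<le> M"
  shows "(\<Sum>u\<leftarrow>[1, \<i>, -1, -\<i>]. disc_form S \<epsilon> u u + disc_form S \<epsilon> u (-u)) \<le> 8 * M"
proof -
  have "disc_form S \<epsilon> u u + disc_form S \<epsilon> u (-u) \<le> 2 * M" if "u \<in> set [1, \<i>, -1, -\<i>]" for u
  proof -
    have "cmod u = 1" using that by auto
    then show ?thesis
      using disc_form_le_bound[OF bound, of u u] disc_form_le_bound[OF bound, of u "-u"] by simp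
  qed
  then have "(\<Sum>u\<leftarrow>[1, \<i>, -1, -\<i>]. disc_form S \<epsilon> u u + disc_form S \<epsilon> u (-u))
      \<le> (\<Sum>u\<leftarrow>[1, \<i>, -1, -\<i>]. 2 * M)"
    by (rule sum_list_mono)
  also have "\<dots> = 8 * M"
    by simp
  finally show ?thesis .
qed

lemma periodic_attains_max:
  fixes f :: "real \<Rightarrow> real \<Rightarrow> real"
  assumes cont: "continuous_on ({-pi..pi} \<times> {-pi..pi}) (\<lambda>x. f (fst x) (snd x))"
    and edge1: "\<And>t. f (-pi) t = f pi t" and edge2: "\<And>t. f t (-pi) = f t pi"
  shows "\<exists>a\<in>{-pi<..pi}. \<exists>b\<in>{-pi<..pi}. \<forall>t1\<in>{-pi<..pi}. \<forall>t2\<in>{-pi<..pi}. f t1 t2 \<le> f a b"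
proof -
  have "compact ({-pi..pi} \<times> {-pi..pi::real})"
    by (intro compact_Times compact_Icc)
  moreover have "{-pi..pi} \<times> {-pi..pi::real} \<noteq> {}"
    by simp
  ultimately obtain x y where xy: "x \<in> {-pi..pi}" "y \<in> {-pi..pi}"
    and max: "\<And>t1 t2. t1 \<in> {-pi..pi} \<Longrightarrow> t2 \<in> {-pi..pi} \<Longrightarrow> f t1 t2 \<le> f x y"
    using continuous_attains_sup[OF _ _ cont] by fastforce
  define a where "a = (if x = -pi then pi else x)"
  define b where "b = (if y = -pi then pi else y)"
  have "a \<in> {-pi<..pi}" "b \<in> {-pi<..pi}"
    using xy by (auto simp: a_def b_def)
  moreover have "f a b = f x y"
    by (simp add: a_def b_def edge1 edge2)
  ultimately show ?thesis
    using max by (metis greaterThanAtMost_iff atLeastAtMost_iff less_imp_le)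
qed

lemma band_disc_continuous: "continuous_on A (\<lambda>x. band_disc S \<epsilon> (fst x) (snd x))"
  unfolding band_disc_def band_p_def band_q_def by (intro continuous_intros)

lemma band_disc_periodic:
  "band_disc S \<epsilon> (-pi) t = band_disc S \<epsilon> pi t" "band_disc S \<epsilon> t (-pi) = band_disc S \<epsilon> t pi"
proof -
  have "cis (-pi) = cis pi" by (simp add: complex_eq_iff)
  then show "band_disc S \<epsilon> (-pi) t = band_disc S \<epsilon> pi t" "band_disc S \<epsilon> t (-pi) = band_disc S \<epsilon> t pi"
    by (simp_all only: band_disc_eq_disc_form)
qed

theorem mainTheorem11:
  fixes S :: "complex^4^4" and \<epsilon> :: real
  assumes "hermitian4 S" and "\<epsilon> \<in> {1, -1}"
  shows "\<exists>\<theta>1\<in>{-pi<..pi}. \<exists>\<theta>2\<in>{-pi<..pi}.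
           (\<forall>t1\<in>{-pi<..pi}. \<forall>t2\<in>{-pi<..pi}.
              (band_p S \<epsilon> t1 t2)\<^sup>2 - band_q S \<epsilon> t1 t2
                \<le> (band_p S \<epsilon> \<theta>1 \<theta>2)\<^sup>2 - band_q S \<epsilon> \<theta>1 \<theta>2)
           \<and> (band_p S \<epsilon> \<theta>1 \<theta>2)\<^sup>2 - band_q S \<epsilon> \<theta>1 \<theta>2 \<ge> 0"
proof -
  obtain a b where ab: "a \<in> {-pi<..pi}" "b \<in> {-pi<..pi}"
    and max: "\<forall>t1\<in>{-pi<..pi}. \<forall>t2\<in>{-pi<..pi}. band_disc S \<epsilon> t1 t2 \<le> band_disc S \<epsilon> a b"
    using periodic_attains_max[OF band_disc_continuous[where S = S and \<epsilon> = \<epsilon>] band_disc_periodic] by blast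
  let ?M = "band_disc S \<epsilon> a b"
  have "(\<Sum>u\<leftarrow>[1, \<i>, -1, -\<i>]. disc_form S \<epsilon> u u + disc_form S \<epsilon> u (-u)) \<le> 8 * ?M"
    using max by (intro sample_sum_le_bound) auto
  moreover have "0 \<le> (\<Sum>u\<leftarrow>[1, \<i>, -1, -\<i>]. disc_form S \<epsilon> u u + disc_form S \<epsilon> u (-u))"
    using assms(2) by (intro disc_form_average_nonneg) auto
  ultimately have "0 \<le> ?M"
    by linarith
  then show ?thesis
    using ab max unfolding band_disc_def by blast
qed

end
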